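(* Let $0<\ell\le\infty$ and let $g$ be a non-negative measurable function on $(0,\ell)$ (with $g(x)>0$ for $0<x<\ell$ when $p<0$). (a) If $p<0$ or $p\ge1$, then $$\int_0^\ell\Big(\frac1x\int_0^x g(y)dy\Big)^p\frac{dx}{x}\le 1\cdot\int_0^\ell g^p(x)\Big(1-\frac{x}{\ell}\Big)\frac{dx}{x}.$$ (b) If $0<p\le1$, then this inequality holds in the reversed direction. (c) The constant $1$ is sharp in both (a) and (b): in (a) it cannot be replaced by any constant $C<1$, and in (b) it cannot be replaced by any constant $C>1$.
   Context: When $\ell=\infty$, the factor $1-x/\ell$ is interpreted as $1$. *)

theory Defs
  imports "HOL-Analysis.Analysis"
begin

definition Iset :: "ereal \<Rightarrow> real set" where
  "Iset l = {x. 0 < x \<and> ereal x < l}"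

definition wt :: "ereal \<Rightarrow> real \<Rightarrow> real" where
  "wt l x = (if l = \<infinity> then 1 else 1 - x / real_of_ereal l)"

definition epow :: "ennreal \<Rightarrow> real \<Rightarrow> ennreal" where
  "epow a p = (if p = 0 then 1
     else if a = \<infinity> then (if p > 0 then \<infinity> else 0)
     else if a = 0 then (if p > 0 then 0 else \<infinity>)
     else ennreal (enn2real a powr p))"

definition hardy_adm :: "real \<Rightarrow> ereal \<Rightarrow> (real \<Rightarrow> real) \<Rightarrow> bool" where
  "hardy_adm p l g \<longleftrightarrow> set_borel_measurable lborel (Iset l) g
     \<and> (\<forall>x\<in>Iset l. 0 \<le> g x) \<and> (p < 0 \<longrightarrow> (\<forall>x\<in>Iset l. 0 < g x))"

definition hardy_lhs :: "real \<Rightarrow> ereal \<Rightarrow> (real \<Rightarrow> real) \<Rightarrow> ennreal" where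
  "hardy_lhs p l g = (\<integral>\<^sup>+ x \<in> Iset l.
      epow (ennreal (1 / x) * (\<integral>\<^sup>+ y \<in> {0<..<x}. ennreal (g y) \<partial>lborel)) p
      * ennreal (1 / x) \<partial>lborel)"

definition hardy_rhs :: "real \<Rightarrow> ereal \<Rightarrow> (real \<Rightarrow> real) \<Rightarrow> ennreal" where
  "hardy_rhs p l g = (\<integral>\<^sup>+ x \<in> Iset l.
      epow (ennreal (g x)) p * ennreal (wt l x / x) \<partial>lborel)"

end

theory Submission
  imports Defs
begin

text \<open>For fixed \<open>x\<close>, Jensen's inequality for the convex (\<open>p < 0\<close> or \<open>p \<ge> 1\<close>) or concave
  (\<open>0 < p \<le> 1\<close>) function \<open>t powr p\<close>, applied to the mean of \<open>g\<close> over \<open>(0, x)\<close>, bounds the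
  left integrand by \<open>(1/x) \<integral>\<^sub>0\<^sup>x g(y) powr p dy\<close> from above resp. below. Integrating against
  \<open>dx/x\<close> and exchanging the order of integration turns this into
  \<open>\<integral>\<^sub>0\<^sup>l g(y) powr p (1/y - 1/l) dy\<close>, which is the right-hand side.
  For sharpness take \<open>g(x) = x powr a\<close> on \<open>(0, m)\<close> with \<open>t = a p \<rightarrow> 0+\<close>: both sides are then
  \<open>m powr t / t\<close> up to a factor \<open>(1 + t/p) powr (-p) \<rightarrow> 1\<close> and bounded error terms.\<close>

section \<open>Jensen's inequality for real powers\<close>

lemma epow_ennreal:
  assumes "0 \<le> t" "p \<noteq> 0" "0 < t \<or> 0 < p"
  shows "epow (ennreal t) p = ennreal (t powr p)"
  using assms by (auto simp: epow_def)

lemma borel_measurable_epow [measurable]: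
  assumes [measurable]: "f \<in> borel_measurable M"
  shows "(\<lambda>y. epow (ennreal (f y)) p) \<in> borel_measurable M"
proof -
  have "epow (ennreal t) p = (if p = 0 then 1 else if t \<le> 0 then (if p > 0 then 0 else \<infinity>)
      else ennreal (t powr p))" for t
    by (auto simp: epow_def ennreal_eq_0_iff)
  then show ?thesis by simp
qed

lemma powr_tangent_le:
  fixes m t p :: real
  assumes "0 < m" "0 \<le> t" "0 < t \<or> 0 < p" and p: "p \<le> 0 \<or> 1 \<le> p"
  shows "m powr p + p * m powr (p - 1) * (t - m) \<le> t powr p"
proof (cases "t = 0")
  case True
  with assms have "1 \<le> p" by auto
  have "m powr p + p * m powr (p - 1) * (0 - m) = (1 - p) * m powr p"
    using \<open>0 < m\<close> by (simp add: powr_diff algebra_simps)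
  with True \<open>1 \<le> p\<close> show ?thesis by (simp add: mult_nonpos_nonneg)
next
  case False
  have "0 \<le> p * (p - 1)" using p by (auto intro: mult_nonpos_nonpos)
  then have "p * m powr (p - 1) * (t - m) \<le> t powr p - m powr p"
    using assms False
    by (intro f''_imp_f'[where C = "{0<..}" and f'' = "\<lambda>x. p * (p - 1) * x powr (p - 1 - 1)"])
       (auto intro!: derivative_eq_intros)
  then show ?thesis by simp
qed

lemma powr_le_tangent:
  fixes m t p :: real
  assumes "0 < m" "0 \<le> t" and p: "0 < p" "p \<le> 1"
  shows "t powr p \<le> m powr p + p * m powr (p - 1) * (t - m)"
proof (cases "t = 0")
  case True
  have "m powr p + p * m powr (p - 1) * (0 - m) = (1 - p) * m powr p"
    using \<open>0 < m\<close> by (simp add: powr_diff algebra_simps)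
  with True p show ?thesis by simp
next
  case False
  have "0 \<le> - (p * (p - 1))" using p by (simp add: mult_nonneg_nonpos)
  then have "- p * m powr (p - 1) * (t - m) \<le> - (t powr p) - - (m powr p)"
    using assms False
    by (intro f''_imp_f'[where C = "{0<..}" and f'' = "\<lambda>x. - (p * (p - 1)) * x powr (p - 1 - 1)"])
       (auto intro!: derivative_eq_intros mult_nonpos_nonneg)
  then show ?thesis by (simp add: algebra_simps)
qed

lemma set_integral_affine_mean:
  fixes h :: "'a \<Rightarrow> real"
  assumes S: "S \<in> sets M" "emeasure M S \<noteq> \<infinity>" and h: "set_integrable M S h"
    and mean: "(LINT y:S|M. h y) = measure M S * m"
  shows "set_integrable M S (\<lambda>y. d + c * (h y - m))" "(LINT y:S|M. d + c * (h y - m)) = measure M S * d"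
proof -
  have const: "set_integrable M S (\<lambda>_. e)" for e :: real
    using S by (simp add: set_integrable_def less_top)
  show "set_integrable M S (\<lambda>y. d + c * (h y - m))"
    using h const by simp
  show "(LINT y:S|M. d + c * (h y - m)) = measure M S * d"
    using S h const mean by (simp add: set_integral_const)
qed

lemma set_integrable_of_nn_integral:
  fixes f :: "'a \<Rightarrow> real"
  assumes [measurable]: "f \<in> borel_measurable M" "S \<in> sets M"
    and nonneg: "\<And>y. y \<in> S \<Longrightarrow> 0 \<le> f y"
    and eq: "(\<integral>\<^sup>+y\<in>S. ennreal (f y) \<partial>M) = ennreal c" and "0 \<le> c"
  shows "set_integrable M S f" "(LINT y:S|M. f y) = c"
proof -
  have "(\<integral>\<^sup>+y. ennreal (indicator S y *\<^sub>R f y) \<partial>M) = ennreal c"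
    using eq by (simp add: nn_integral_set_ennreal mult.commute)
  moreover have "AE y in M. 0 \<le> indicator S y *\<^sub>R f y"
    using nonneg by (auto simp: indicator_def)
  ultimately have "integrable M (\<lambda>y. indicator S y *\<^sub>R f y) \<and> (\<integral>y. indicator S y *\<^sub>R f y \<partial>M) = c"
    using \<open>0 \<le> c\<close> by (subst nn_integral_eq_integrable[symmetric]) auto
  then show "set_integrable M S f" "(LINT y:S|M. f y) = c"
    by (simp_all add: set_integrable_def set_lebesgue_integral_def)
qed

lemma le_one_plus_powr:
  fixes t p :: real
  assumes "0 \<le> t" "1 \<le> p"
  shows "t \<le> 1 + t powr p"
proof (cases "t \<le> 1")
  case False
  then have "t powr 1 \<le> t powr p" using assms by (intro powr_mono) auto
  then show ?thesis using False by simp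
qed (use powr_ge_zero[of t p] in linarith)

lemma powr_le_one_plus:
  fixes t p :: real
  assumes "0 \<le> t" "0 \<le> p" "p \<le> 1"
  shows "t powr p \<le> 1 + t"
proof (cases "t \<le> 1")
  case True
  then have "t powr p \<le> 1" using assms by (intro powr_le1) auto
  then show ?thesis using assms by simp
next
  case False
  then have "t powr p \<le> t powr 1" using assms by (intro powr_mono) auto
  then show ?thesis using False by simp
qed

lemma set_nn_integral_le_emeasure_add:
  fixes f g :: "'a \<Rightarrow> real"
  assumes [measurable]: "S \<in> sets M" "g \<in> borel_measurable M"
    and nonneg: "\<And>y. y \<in> S \<Longrightarrow> 0 \<le> g y" and le: "\<And>y. y \<in> S \<Longrightarrow> f y \<le> 1 + g y"
  shows "(\<integral>\<^sup>+y\<in>S. ennreal (f y) \<partial>M) \<le> emeasure M S + (\<integral>\<^sup>+y\<in>S. ennreal (g y) \<partial>M)"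
proof -
  have "ennreal (f y) \<le> 1 + ennreal (g y)" if "y \<in> S" for y
    using ennreal_leI[OF le[OF that]] nonneg[OF that] by (simp add: ennreal_plus)
  then have "(\<integral>\<^sup>+y\<in>S. ennreal (f y) \<partial>M) \<le> (\<integral>\<^sup>+y\<in>S. 1 + ennreal (g y) \<partial>M)"
    by (intro nn_integral_mono) (auto split: split_indicator)
  also have "\<dots> = emeasure M S + (\<integral>\<^sup>+y\<in>S. ennreal (g y) \<partial>M)"
    by (simp add: distrib_right nn_integral_add)
  finally show ?thesis .
qed

lemma set_nn_integral_powr_eq_top:
  fixes h :: "'a \<Rightarrow> real"
  assumes [measurable]: "S \<in> sets M" "h \<in> borel_measurable M" and "emeasure M S < \<infinity>"
    and "\<And>y. y \<in> S \<Longrightarrow> 0 \<le> h y" "1 \<le> p" and "(\<integral>\<^sup>+y\<in>S. ennreal (h y) \<partial>M) = \<infinity>"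
  shows "(\<integral>\<^sup>+y\<in>S. ennreal (h y powr p) \<partial>M) = \<infinity>"
proof -
  have "(\<integral>\<^sup>+y\<in>S. ennreal (h y) \<partial>M) \<le> emeasure M S + (\<integral>\<^sup>+y\<in>S. ennreal (h y powr p) \<partial>M)"
    using assms by (intro set_nn_integral_le_emeasure_add le_one_plus_powr) auto
  with assms show ?thesis by (auto simp: top_unique)
qed

lemma set_nn_integral_powr_less_top:
  fixes h :: "'a \<Rightarrow> real"
  assumes [measurable]: "S \<in> sets M" "h \<in> borel_measurable M" and "emeasure M S < \<infinity>"
    and "\<And>y. y \<in> S \<Longrightarrow> 0 \<le> h y" "0 \<le> p" "p \<le> 1" and "(\<integral>\<^sup>+y\<in>S. ennreal (h y) \<partial>M) < \<infinity>"
  shows "(\<integral>\<^sup>+y\<in>S. ennreal (h y powr p) \<partial>M) < \<infinity>"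
proof -
  have "(\<integral>\<^sup>+y\<in>S. ennreal (h y powr p) \<partial>M) \<le> emeasure M S + (\<integral>\<^sup>+y\<in>S. ennreal (h y) \<partial>M)"
    using assms by (intro set_nn_integral_le_emeasure_add powr_le_one_plus) auto
  also have "\<dots> < \<infinity>" using assms by simp
  finally show ?thesis .
qed

lemma emeasure_eq_0_if_set_nn_integral_eq_0:
  fixes h :: "'a \<Rightarrow> real"
  assumes S: "S \<in> sets M" and [measurable]: "h \<in> borel_measurable M"
    and zero: "(\<integral>\<^sup>+y\<in>S. ennreal (h y) \<partial>M) = 0" and pos: "\<And>y. y \<in> S \<Longrightarrow> 0 < h y"
  shows "emeasure M S = 0"
proof -
  have "AE y in M. ennreal (h y) * indicator S y = 0"
    using zero S by (simp add: nn_integral_0_iff_AE)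
  moreover have "y \<notin> S" if "ennreal (h y) * indicator S y = 0" for y
    using pos[of y] that by (cases "y \<in> S") (auto simp: ennreal_eq_0_iff)
  ultimately have "AE y in M. y \<notin> S"
    by (rule eventually_mono)
  then show ?thesis
    using sets.sets_into_space[OF S] by (subst (asm) AE_iff_measurable[OF S]) auto
qed

lemma powr_mean_le_mean_powr:
  fixes h :: "'a \<Rightarrow> real"
  assumes S[measurable]: "S \<in> sets M" "emeasure M S < \<infinity>" and h[measurable]: "h \<in> borel_measurable M"
    and nonneg: "\<And>y. y \<in> S \<Longrightarrow> 0 \<le> h y" and m: "0 < m"
    and mean: "(\<integral>\<^sup>+y\<in>S. ennreal (h y) \<partial>M) = ennreal (measure M S * m)"
    and b: "(\<integral>\<^sup>+y\<in>S. ennreal (h y powr p) \<partial>M) = ennreal b" "0 \<le> b"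
    and p: "p < 0 \<or> 1 \<le> p" and pos: "\<And>y. p < 0 \<Longrightarrow> y \<in> S \<Longrightarrow> 0 < h y"
  shows "measure M S * m powr p \<le> b"
proof -
  have int_h: "set_integrable M S h" "(LINT y:S|M. h y) = measure M S * m"
    using set_integrable_of_nn_integral[OF h S(1) nonneg mean] m by simp_all
  have int_powr: "set_integrable M S (\<lambda>y. h y powr p)" "(LINT y:S|M. h y powr p) = b"
    using set_integrable_of_nn_integral[OF _ S(1) _ b(1) b(2)] nonneg by (auto intro: powr_real_measurable h)
  note tangent = set_integral_affine_mean[OF S(1) _ int_h, of "m powr p" "p * m powr (p - 1)"]
  have "m powr p + p * m powr (p - 1) * (h y - m) \<le> h y powr p" if "y \<in> S" for y
    using powr_tangent_le[OF m nonneg[OF that]] pos[OF _ that] p by fastforce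
  then have "(LINT y:S|M. m powr p + p * m powr (p - 1) * (h y - m)) \<le> (LINT y:S|M. h y powr p)"
    using tangent(1) int_powr(1) S(2) by (intro set_integral_mono) (auto simp: less_top)
  with tangent(2) int_powr(2) S(2) show ?thesis by (simp add: less_top)
qed

lemma mean_powr_le_powr_mean:
  fixes h :: "'a \<Rightarrow> real"
  assumes S[measurable]: "S \<in> sets M" "emeasure M S < \<infinity>" and h[measurable]: "h \<in> borel_measurable M"
    and nonneg: "\<And>y. y \<in> S \<Longrightarrow> 0 \<le> h y" and m: "0 < m"
    and mean: "(\<integral>\<^sup>+y\<in>S. ennreal (h y) \<partial>M) = ennreal (measure M S * m)"
    and b: "(\<integral>\<^sup>+y\<in>S. ennreal (h y powr p) \<partial>M) = ennreal b" "0 \<le> b"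
    and p: "0 < p" "p \<le> 1"
  shows "b \<le> measure M S * m powr p"
proof -
  have int_h: "set_integrable M S h" "(LINT y:S|M. h y) = measure M S * m"
    using set_integrable_of_nn_integral[OF h S(1) nonneg mean] m by simp_all
  have int_powr: "set_integrable M S (\<lambda>y. h y powr p)" "(LINT y:S|M. h y powr p) = b"
    using set_integrable_of_nn_integral[OF _ S(1) _ b(1) b(2)] nonneg by (auto intro: powr_real_measurable h)
  note tangent = set_integral_affine_mean[OF S(1) _ int_h, of "m powr p" "p * m powr (p - 1)"]
  have "h y powr p \<le> m powr p + p * m powr (p - 1) * (h y - m)" if "y \<in> S" for y
    using powr_le_tangent[OF m nonneg[OF that] p] .
  then have "(LINT y:S|M. h y powr p) \<le> (LINT y:S|M. m powr p + p * m powr (p - 1) * (h y - m))"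
    using tangent(1) int_powr(1) S(2) by (intro set_integral_mono) (auto simp: less_top)
  with tangent(2) int_powr(2) S(2) show ?thesis by (simp add: less_top)
qed

lemma epow_mean_le_mean_epow:
  fixes h :: "'a \<Rightarrow> real"
  assumes S[measurable]: "S \<in> sets M" and S_pos: "0 < emeasure M S" and S_fin: "emeasure M S < \<infinity>"
    and [measurable]: "h \<in> borel_measurable M"
    and nonneg: "\<And>y. y \<in> S \<Longrightarrow> 0 \<le> h y"
    and p: "p < 0 \<or> 1 \<le> p" and pos: "\<And>y. p < 0 \<Longrightarrow> y \<in> S \<Longrightarrow> 0 < h y"
  shows "epow (ennreal (1 / measure M S) * (\<integral>\<^sup>+y\<in>S. ennreal (h y) \<partial>M)) p
       \<le> ennreal (1 / measure M S) * (\<integral>\<^sup>+y\<in>S. epow (ennreal (h y)) p \<partial>M)"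
proof -
  define w where "w = measure M S"
  have w_eq: "emeasure M S = ennreal w"
    using S_fin by (simp add: w_def emeasure_eq_ennreal_measure)
  with S_pos have "0 < w" by simp
  define A where "A = (\<integral>\<^sup>+y\<in>S. ennreal (h y) \<partial>M)"
  define B where "B = (\<integral>\<^sup>+y\<in>S. ennreal (h y powr p) \<partial>M)"
  have B_eq: "(\<integral>\<^sup>+y\<in>S. epow (ennreal (h y)) p \<partial>M) = B"
    unfolding B_def using nonneg pos p
    by (intro nn_integral_cong) (auto simp: epow_ennreal indicator_def)
  consider (top) "A = \<infinity>" | (zero) "A = 0" | (real) a where "A = ennreal a" "0 < a"
    by (cases A rule: ennreal_cases) (auto simp: less_le)
  then have "epow (ennreal (1 / w) * A) p \<le> ennreal (1 / w) * B"
  proof cases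
    case top
    show ?thesis
    proof (cases "p < 0")
      case True
      with top \<open>0 < w\<close> show ?thesis by (simp add: ennreal_mult_top epow_def)
    next
      case False
      with p top S_fin nonneg have "B = \<infinity>"
        unfolding B_def by (intro set_nn_integral_powr_eq_top) (auto simp: A_def)
      with \<open>0 < w\<close> show ?thesis by (simp add: ennreal_mult_top)
    qed
  next
    case zero
    have "p < 0 \<Longrightarrow> emeasure M S = 0"
      using zero pos unfolding A_def by (intro emeasure_eq_0_if_set_nn_integral_eq_0) auto
    with zero p S_pos show ?thesis by (auto simp: epow_def)
  next
    case (real a)
    define m where "m = a / w"
    have m: "0 < m" "A = ennreal (w * m)" using real \<open>0 < w\<close> by (simp_all add: m_def)
    have "epow (ennreal (1 / w) * A) p = ennreal (m powr p)"
      using m \<open>0 < w\<close> p by (auto simp: epow_ennreal simp flip: ennreal_mult')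
    moreover have "ennreal (m powr p) \<le> ennreal (1 / w) * B"
    proof (cases B)
      case (real b)
      then have "w * m powr p \<le> b"
        using S_fin m nonneg pos p unfolding w_def
        by (intro powr_mean_le_mean_powr[of S M h]) (auto simp: A_def B_def)
      with real \<open>0 < w\<close> show ?thesis
        by (simp add: field_simps flip: ennreal_mult')
    qed (use \<open>0 < w\<close> in \<open>simp add: ennreal_mult_top ennreal_eq_0_iff\<close>)
    ultimately show ?thesis by simp
  qed
  then show ?thesis using B_eq by (simp add: A_def w_def)
qed

lemma mean_epow_le_epow_mean:
  fixes h :: "'a \<Rightarrow> real"
  assumes S[measurable]: "S \<in> sets M" and S_pos: "0 < emeasure M S" and S_fin: "emeasure M S < \<infinity>"
    and [measurable]: "h \<in> borel_measurable M"
    and nonneg: "\<And>y. y \<in> S \<Longrightarrow> 0 \<le> h y"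
    and p: "0 < p" "p \<le> 1"
  shows "ennreal (1 / measure M S) * (\<integral>\<^sup>+y\<in>S. epow (ennreal (h y)) p \<partial>M)
       \<le> epow (ennreal (1 / measure M S) * (\<integral>\<^sup>+y\<in>S. ennreal (h y) \<partial>M)) p"
proof -
  define w where "w = measure M S"
  have w_eq: "emeasure M S = ennreal w"
    using S_fin by (simp add: w_def emeasure_eq_ennreal_measure)
  with S_pos have "0 < w" by simp
  define A where "A = (\<integral>\<^sup>+y\<in>S. ennreal (h y) \<partial>M)"
  define B where "B = (\<integral>\<^sup>+y\<in>S. ennreal (h y powr p) \<partial>M)"
  have B_eq: "(\<integral>\<^sup>+y\<in>S. epow (ennreal (h y)) p \<partial>M) = B"
    unfolding B_def using nonneg p
    by (intro nn_integral_cong) (auto simp: epow_ennreal indicator_def)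
  consider (top) "A = \<infinity>" | (zero) "A = 0" | (real) a where "A = ennreal a" "0 < a"
    by (cases A rule: ennreal_cases) (auto simp: less_le)
  then have "ennreal (1 / w) * B \<le> epow (ennreal (1 / w) * A) p"
  proof cases
    case top
    with \<open>0 < w\<close> p show ?thesis by (simp add: ennreal_mult_top epow_def)
  next
    case zero
    have "AE y in M. ennreal (h y) * indicator S y = 0"
      using zero unfolding A_def by (simp add: nn_integral_0_iff_AE)
    then have "AE y in M. ennreal (h y powr p) * indicator S y = 0"
      by eventually_elim (use nonneg p in \<open>auto simp: indicator_def split: if_splits\<close>)
    then have "B = 0" unfolding B_def by (simp add: nn_integral_0_iff_AE)
    then show ?thesis by simp
  next
    case (real a)
    define m where "m = a / w"
    have m: "0 < m" "A = ennreal (w * m)" using real \<open>0 < w\<close> by (simp_all add: m_def)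
    have "B < \<infinity>"
      using S_fin nonneg p m(2) unfolding B_def by (intro set_nn_integral_powr_less_top) (auto simp: A_def)
    then obtain b where b: "B = ennreal b" "0 \<le> b"
      by (cases B) auto
    then have "b \<le> w * m powr p"
      using S_fin m nonneg p unfolding w_def
      by (intro mean_powr_le_powr_mean[of S M h]) (auto simp: A_def B_def)
    moreover have "epow (ennreal (1 / w) * A) p = ennreal (m powr p)"
      using m \<open>0 < w\<close> p by (simp add: epow_ennreal flip: ennreal_mult')
    ultimately show ?thesis
      using b \<open>0 < w\<close> by (simp add: field_simps flip: ennreal_mult')
  qed
  then show ?thesis using B_eq by (simp add: A_def w_def)
qed

section \<open>Averaging over \<open>(0, l)\<close>\<close>

lemma Iset_cases:
  assumes "0 < l"
  obtains "l = \<infinity>" "Iset l = {0<..}" | L where "l = ereal L" "0 < L" "Iset l = {0<..<L}"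
proof (cases l)
  case (real L)
  with assms show ?thesis by (intro that(2)[of L]) (auto simp: Iset_def)
next
  case PInf
  with that(1) show ?thesis by (auto simp: Iset_def)
qed (use assms in auto)

lemma sets_Iset [measurable]: "Iset l \<in> sets borel"
proof -
  have "Iset l = {x \<in> space borel. ereal x < l \<and> 0 < x}" by (auto simp: Iset_def)
  also have "\<dots> \<in> sets borel" by measurable
  finally show ?thesis .
qed

lemma Ioo_subset_Iset_of_le: "ereal x \<le> l \<Longrightarrow> {0<..<x} \<subseteq> Iset l"
  by (auto simp: Iset_def intro: less_le_trans[of _ "ereal x" l])

lemma Ioo_subset_Iset: "x \<in> Iset l \<Longrightarrow> {0<..<x} \<subseteq> Iset l"
  by (rule Ioo_subset_Iset_of_le) (simp add: Iset_def less_imp_le)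

lemma nn_integral_Iset_inverse_square:
  assumes y: "y \<in> Iset l"
  shows "(\<integral>\<^sup>+x\<in>{y<..} \<inter> Iset l. ennreal (1 / x\<^sup>2) \<partial>lborel) = ennreal (wt l y / y)"
proof -
  have "0 < y" "0 < l" using y by (auto simp: Iset_def intro: less_trans[of 0 "ereal y" l])
  have deriv: "DERIV (\<lambda>x. - (1 / x)) x :> 1 / x\<^sup>2" if "0 < x" for x :: real
    using that by (auto intro!: derivative_eq_intros simp: power2_eq_square)
  from \<open>0 < l\<close> show ?thesis
  proof (cases rule: Iset_cases)
    case 1
    have "((\<lambda>x::real. - (1 / x)) \<longlongrightarrow> - 0) at_top"
      by (intro tendsto_minus tendsto_divide_0[OF tendsto_const] filterlim_at_top_imp_at_infinity
          filterlim_ident)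
    then have "(\<integral>\<^sup>+x. ennreal (1 / x\<^sup>2) * indicator {y..} x \<partial>lborel) = - 0 - (- (1 / y))"
      using \<open>0 < y\<close> deriv by (intro nn_integral_FTC_atLeast) auto
    moreover have "(\<integral>\<^sup>+x\<in>{y<..} \<inter> Iset l. ennreal (1 / x\<^sup>2) \<partial>lborel)
        = (\<integral>\<^sup>+x. ennreal (1 / x\<^sup>2) * indicator {y..} x \<partial>lborel)"
      using 1 \<open>0 < y\<close> by (intro nn_integral_cong_AE eventually_mono[OF AE_lborel_singleton[of y]])
         (auto simp: indicator_def)
    ultimately show ?thesis using 1 by (simp add: wt_def)
  next
    case (2 L)
    have "y < L" using y 2 by auto
    have "AE x in lborel. ennreal (1 / x\<^sup>2) * indicator ({y<..} \<inter> Iset l) x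
        = ennreal (1 / x\<^sup>2) * indicator {y..L} x"
      using AE_lborel_singleton[of y] AE_lborel_singleton[of L]
      by eventually_elim (use 2 \<open>0 < y\<close> \<open>y < L\<close> in \<open>auto simp: indicator_def\<close>)
    then have "(\<integral>\<^sup>+x\<in>{y<..} \<inter> Iset l. ennreal (1 / x\<^sup>2) \<partial>lborel)
        = (\<integral>\<^sup>+x. ennreal (1 / x\<^sup>2) * indicator {y..L} x \<partial>lborel)"
      by (rule nn_integral_cong_AE)
    also have "\<dots> = - (1 / L) - - (1 / y)"
      using \<open>0 < y\<close> \<open>y < L\<close> deriv by (intro nn_integral_FTC_Icc) auto
    finally show ?thesis using 2 \<open>0 < y\<close> by (simp add: wt_def field_simps)
  qed
qed

lemma nn_integral_Iset_average:
  fixes F :: "real \<Rightarrow> ennreal"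
  assumes [measurable]: "F \<in> borel_measurable borel"
  shows "(\<integral>\<^sup>+x\<in>Iset l. ennreal (1 / x) * (\<integral>\<^sup>+y\<in>{0<..<x}. F y \<partial>lborel) * ennreal (1 / x) \<partial>lborel)
       = (\<integral>\<^sup>+y\<in>Iset l. F y * ennreal (wt l y / y) \<partial>lborel)"
proof -
  define K where "K x y = F y * indicator {0<..<x} y * (ennreal (1 / x\<^sup>2) * indicator (Iset l) x)"
    for x y :: real
  have "case_prod K = (\<lambda>z. F (snd z) * indicator {z. 0 < snd z \<and> snd z < fst z} z
      * (ennreal (1 / (fst z)\<^sup>2) * indicator (Iset l) (fst z)))"
    by (auto simp: K_def indicator_def fun_eq_iff)
  then have K_measurable: "case_prod K \<in> borel_measurable (lborel \<Otimes>\<^sub>M lborel)"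
    by simp
  have inner_x: "(\<integral>\<^sup>+y. K x y \<partial>lborel)
      = ennreal (1 / x) * (\<integral>\<^sup>+y\<in>{0<..<x}. F y \<partial>lborel) * ennreal (1 / x) * indicator (Iset l) x"
    for x
  proof (cases "x \<in> Iset l")
    case True
    then have "0 < x" by (simp add: Iset_def)
    then have "ennreal (1 / x\<^sup>2) = ennreal (1 / x) * ennreal (1 / x)"
      by (simp add: power2_eq_square flip: ennreal_mult)
    moreover have "(\<integral>\<^sup>+y. K x y \<partial>lborel) = (\<integral>\<^sup>+y\<in>{0<..<x}. F y \<partial>lborel) * ennreal (1 / x\<^sup>2)"
      using True unfolding K_def by (simp add: nn_integral_multc)
    ultimately show ?thesis using True by (simp add: mult_ac)
  qed (simp add: K_def)
  have K_eq: "K x y = F y * indicator (Iset l) y * (ennreal (1 / x\<^sup>2) * indicator ({y<..} \<inter> Iset l) x)"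
    for x y
    using Ioo_subset_Iset[of x l] by (auto simp: K_def indicator_def subset_eq Iset_def)
  have inner_y: "(\<integral>\<^sup>+x. K x y \<partial>lborel) = F y * ennreal (wt l y / y) * indicator (Iset l) y" for y
  proof -
    have "(\<integral>\<^sup>+x. K x y \<partial>lborel)
        = F y * indicator (Iset l) y * (\<integral>\<^sup>+x\<in>{y<..} \<inter> Iset l. ennreal (1 / x\<^sup>2) \<partial>lborel)"
      unfolding K_eq by (simp add: nn_integral_cmult)
    then show ?thesis
      by (cases "y \<in> Iset l") (simp_all add: nn_integral_Iset_inverse_square)
  qed
  have "(\<integral>\<^sup>+x\<in>Iset l. ennreal (1 / x) * (\<integral>\<^sup>+y\<in>{0<..<x}. F y \<partial>lborel) * ennreal (1 / x) \<partial>lborel)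
      = (\<integral>\<^sup>+x. (\<integral>\<^sup>+y. K x y \<partial>lborel) \<partial>lborel)"
    by (simp add: inner_x)
  also have "\<dots> = (\<integral>\<^sup>+y. (\<integral>\<^sup>+x. K x y \<partial>lborel) \<partial>lborel)"
    by (rule lborel_pair.Fubini'[symmetric]) (rule K_measurable)
  also have "\<dots> = (\<integral>\<^sup>+y\<in>Iset l. F y * ennreal (wt l y / y) \<partial>lborel)"
    by (simp add: inner_y)
  finally show ?thesis .
qed

lemma hardy_lhs_cong:
  assumes "\<And>x. x \<in> Iset l \<Longrightarrow> g x = g' x"
  shows "hardy_lhs p l g = hardy_lhs p l g'"
proof -
  have "(\<integral>\<^sup>+y\<in>{0<..<x}. ennreal (g y) \<partial>lborel) = (\<integral>\<^sup>+y\<in>{0<..<x}. ennreal (g' y) \<partial>lborel)"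
    if "x \<in> Iset l" for x
    using assms Ioo_subset_Iset[OF that] by (intro set_nn_integral_cong) auto
  then show ?thesis
    unfolding hardy_lhs_def by (intro set_nn_integral_cong) auto
qed

lemma hardy_rhs_cong:
  assumes "\<And>x. x \<in> Iset l \<Longrightarrow> g x = g' x"
  shows "hardy_rhs p l g = hardy_rhs p l g'"
  unfolding hardy_rhs_def using assms by (intro set_nn_integral_cong) auto

lemma hardy_adm_obtain_borel:
  assumes "hardy_adm p l g"
  obtains G where "G \<in> borel_measurable borel" "\<And>x. x \<in> Iset l \<Longrightarrow> G x = g x"
proof
  show "(\<lambda>x. indicator (Iset l) x *\<^sub>R g x) \<in> borel_measurable borel"
    using assms by (simp add: hardy_adm_def set_borel_measurable_def)
qed simp

lemma hardy_lhs_le_rhs: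
  assumes adm: "hardy_adm p l g" and p: "p < 0 \<or> 1 \<le> p"
  shows "hardy_lhs p l g \<le> hardy_rhs p l g"
proof -
  obtain G where [measurable]: "G \<in> borel_measurable borel" and G: "\<And>x. x \<in> Iset l \<Longrightarrow> G x = g x"
    using hardy_adm_obtain_borel[OF adm] by blast
  have jensen: "epow (ennreal (1 / x) * (\<integral>\<^sup>+y\<in>{0<..<x}. ennreal (G y) \<partial>lborel)) p
      \<le> ennreal (1 / x) * (\<integral>\<^sup>+y\<in>{0<..<x}. epow (ennreal (G y)) p \<partial>lborel)" if "x \<in> Iset l" for x
    using epow_mean_le_mean_epow[of "{0<..<x}" lborel G p] adm G Ioo_subset_Iset[OF that] p that
    by (auto simp: hardy_adm_def Iset_def subset_eq)
  have "hardy_lhs p l G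
      \<le> (\<integral>\<^sup>+x\<in>Iset l. ennreal (1 / x) * (\<integral>\<^sup>+y\<in>{0<..<x}. epow (ennreal (G y)) p \<partial>lborel) * ennreal (1 / x) \<partial>lborel)"
    unfolding hardy_lhs_def using jensen
    by (intro nn_integral_mono) (auto split: split_indicator intro: mult_right_mono)
  also have "\<dots> = hardy_rhs p l G"
    unfolding hardy_rhs_def by (rule nn_integral_Iset_average) simp
  finally show ?thesis
    using G by (simp add: hardy_lhs_cong[of l G g] hardy_rhs_cong[of l G g])
qed

lemma hardy_rhs_le_lhs:
  assumes adm: "hardy_adm p l g" and p: "0 < p" "p \<le> 1"
  shows "hardy_rhs p l g \<le> hardy_lhs p l g"
proof -
  obtain G where [measurable]: "G \<in> borel_measurable borel" and G: "\<And>x. x \<in> Iset l \<Longrightarrow> G x = g x"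
    using hardy_adm_obtain_borel[OF adm] by blast
  have jensen: "ennreal (1 / x) * (\<integral>\<^sup>+y\<in>{0<..<x}. epow (ennreal (G y)) p \<partial>lborel)
      \<le> epow (ennreal (1 / x) * (\<integral>\<^sup>+y\<in>{0<..<x}. ennreal (G y) \<partial>lborel)) p" if "x \<in> Iset l" for x
    using mean_epow_le_epow_mean[of "{0<..<x}" lborel G p] adm G Ioo_subset_Iset[OF that] p that
    by (auto simp: hardy_adm_def Iset_def subset_eq)
  have "hardy_rhs p l G
      = (\<integral>\<^sup>+x\<in>Iset l. ennreal (1 / x) * (\<integral>\<^sup>+y\<in>{0<..<x}. epow (ennreal (G y)) p \<partial>lborel) * ennreal (1 / x) \<partial>lborel)"
    unfolding hardy_rhs_def by (rule nn_integral_Iset_average[symmetric]) simp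
  also have "\<dots> \<le> hardy_lhs p l G"
    unfolding hardy_lhs_def using jensen
    by (intro nn_integral_mono) (auto split: split_indicator intro: mult_right_mono)
  finally show ?thesis
    using G by (simp add: hardy_lhs_cong[of l G g] hardy_rhs_cong[of l G g])
qed

section \<open>Sharpness\<close>

lemma wt_nonneg: "x \<in> Iset l \<Longrightarrow> 0 \<le> wt l x"
  by (cases l) (auto simp: Iset_def wt_def)

lemma wt_le_one: "x \<in> Iset l \<Longrightarrow> wt l x \<le> 1"
  by (cases l) (auto simp: Iset_def wt_def)

lemma wt_ge_linear:
  assumes "0 < m" "ereal m \<le> l" "0 < x"
  shows "1 - x / m \<le> wt l x"
  using assms by (cases l) (auto simp: wt_def intro!: divide_left_mono)

lemma nn_integral_powr_Ioo:
  fixes a c x :: real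
  assumes a: "-1 < a" and "0 < x" "0 \<le> c"
  shows "(\<integral>\<^sup>+y\<in>{0<..<x}. ennreal (c * y powr a) \<partial>lborel) = ennreal (c * (x powr (a + 1) / (a + 1)))"
proof -
  have "((\<lambda>y. c * y powr a) has_integral c * (x powr (a + 1) / (a + 1))) {0..x}"
    using has_integral_powr_from_0[OF a, of x] \<open>0 < x\<close> by (intro has_integral_mult_right) simp
  moreover have "(\<lambda>y. indicator {0..x} y * (c * y powr a)) = (\<lambda>y. if y \<in> {0..x} then c * y powr a else 0)"
    by (simp add: fun_eq_iff)
  ultimately have "((\<lambda>y. indicator {0..x} y * (c * y powr a)) has_integral c * (x powr (a + 1) / (a + 1))) UNIV"
    by (simp only: has_integral_restrict_UNIV)
  then have "(\<integral>\<^sup>+y. ennreal (indicator {0..x} y * (c * y powr a)) \<partial>lborel) = ennreal (c * (x powr (a + 1) / (a + 1)))"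
    using \<open>0 \<le> c\<close> by (intro nn_integral_has_integral_lborel) (auto simp: indicator_def)
  moreover have "AE y in lborel. ennreal (c * y powr a) * indicator {0<..<x} y = ennreal (indicator {0..x} y * (c * y powr a))"
    using AE_lborel_singleton[of 0] AE_lborel_singleton[of x] by eventually_elim (auto simp: indicator_def)
  ultimately show ?thesis by (simp add: nn_integral_cong_AE)
qed

lemma nn_integral_powr_Ici:
  fixes a c m :: real
  assumes a: "a < -1" and m: "0 < m" and "0 \<le> c"
  shows "(\<integral>\<^sup>+y\<in>{m..}. ennreal (c * y powr a) \<partial>lborel) = ennreal (c * (- (m powr (a + 1)) / (a + 1)))"
proof -
  have "((\<lambda>y. c * y powr a) has_integral c * (- (m powr (a + 1)) / (a + 1))) {m..}"
    using has_integral_powr_to_inf[OF a m] by (intro has_integral_mult_right)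
  moreover have "(\<lambda>y. indicator {m..} y * (c * y powr a)) = (\<lambda>y. if y \<in> {m..} then c * y powr a else 0)"
    by (simp add: fun_eq_iff)
  ultimately have "((\<lambda>y. indicator {m..} y * (c * y powr a)) has_integral c * (- (m powr (a + 1)) / (a + 1))) UNIV"
    by (simp only: has_integral_restrict_UNIV)
  then have "(\<integral>\<^sup>+y. ennreal (indicator {m..} y * (c * y powr a)) \<partial>lborel) = ennreal (c * (- (m powr (a + 1)) / (a + 1)))"
    using \<open>0 \<le> c\<close> by (intro nn_integral_has_integral_lborel) (auto simp: indicator_def)
  moreover have "(\<integral>\<^sup>+y\<in>{m..}. ennreal (c * y powr a) \<partial>lborel)
      = (\<integral>\<^sup>+y. ennreal (indicator {m..} y * (c * y powr a)) \<partial>lborel)"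
    by (intro nn_integral_cong) (simp add: indicator_def)
  ultimately show ?thesis by simp
qed

text \<open>Near \<open>0\<close> the test function is \<open>x powr a\<close> with \<open>a * p\<close> small and positive, which makes both
  sides of the inequality blow up like \<open>m powr (a * p) / (a * p)\<close>; the tail \<open>x\<close> on \<open>[m, \<infinity>)\<close>
  only serves to keep it positive when \<open>p < 0\<close>.\<close>
definition hardy_test :: "real \<Rightarrow> real \<Rightarrow> real \<Rightarrow> real \<Rightarrow> real" where
  "hardy_test a p m x = (if 0 < x \<and> x < m then x powr a else if m \<le> x \<and> p < 0 then x else 0)"

lemma hardy_adm_hardy_test: "hardy_adm p l (hardy_test a p m)"
proof -
  have [measurable]: "hardy_test a p m \<in> borel_measurable borel"
    unfolding hardy_test_def by measurable
  show ?thesis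
    by (auto simp: hardy_adm_def set_borel_measurable_def hardy_test_def Iset_def)
qed

lemma hardy_test_mean:
  assumes a: "-1 < a" and "0 < m" "0 < x" "x \<le> m \<or> 0 < p"
  shows "(\<integral>\<^sup>+y\<in>{0<..<x}. ennreal (hardy_test a p m y) \<partial>lborel) = ennreal (min x m powr (a + 1) / (a + 1))"
proof -
  have "(\<integral>\<^sup>+y\<in>{0<..<x}. ennreal (hardy_test a p m y) \<partial>lborel)
      = (\<integral>\<^sup>+y\<in>{0<..<min x m}. ennreal (1 * y powr a) \<partial>lborel)"
    using assms by (intro nn_integral_cong) (auto simp: hardy_test_def indicator_def)
  also have "\<dots> = ennreal (min x m powr (a + 1) / (a + 1))"
    using assms by (subst nn_integral_powr_Ioo) auto
  finally show ?thesis .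
qed

lemma hardy_test_lhs_integrand:
  assumes a: "-1 < a" and "p \<noteq> 0" "0 < m" "0 < x" "x \<le> m \<or> 0 < p"
  shows "epow (ennreal (1 / x) * (\<integral>\<^sup>+y\<in>{0<..<x}. ennreal (hardy_test a p m y) \<partial>lborel)) p * ennreal (1 / x)
       = ennreal ((min x m powr (a + 1) / (a + 1)) powr p * x powr (- p - 1))"
proof -
  define c where "c = min x m powr (a + 1) / (a + 1)"
  have c: "0 < c" using assms by (auto simp: c_def)
  have "epow (ennreal (1 / x) * ennreal c) p * ennreal (1 / x) = ennreal ((c / x) powr p * (1 / x))"
    using c \<open>0 < x\<close> \<open>p \<noteq> 0\<close> by (simp add: epow_ennreal flip: ennreal_mult ennreal_mult')
  also have "(c / x) powr p * (1 / x) = c powr p * x powr (- p - 1)"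
    using c \<open>0 < x\<close> by (simp add: powr_divide powr_diff powr_minus_divide field_simps)
  finally show ?thesis
    using hardy_test_mean[OF assms(1,3,4,5)] by (simp add: c_def)
qed

context
  fixes a p m :: real and l :: ereal
  assumes a: "-1 < a" and ap: "0 < a * p" and m: "0 < m" and ml: "ereal m \<le> l"
begin

lemma hardy_test_epow_small:
  assumes "0 < x" "x < m"
  shows "epow (ennreal (hardy_test a p m x)) p = ennreal (x powr (a * p))"
proof -
  have "p \<noteq> 0" using ap by auto
  with assms show ?thesis by (simp add: hardy_test_def epow_ennreal powr_powr)
qed

lemma hardy_test_lhs_integrand_small:
  assumes "0 < x" "x < m"
  shows "epow (ennreal (1 / x) * (\<integral>\<^sup>+y\<in>{0<..<x}. ennreal (hardy_test a p m y) \<partial>lborel)) p * ennreal (1 / x)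
       = ennreal ((1 + a) powr (- p) * x powr (a * p - 1))"
proof -
  have "(x powr (a + 1) / (a + 1)) powr p * x powr (- p - 1) = (1 + a) powr (- p) * x powr (a * p - 1)"
    using a assms by (simp add: powr_divide powr_powr powr_minus_divide field_simps flip: powr_add)
  moreover have "p \<noteq> 0" using ap by auto
  ultimately show ?thesis
    using hardy_test_lhs_integrand[of a p m x] a m assms by auto
qed

lemma hardy_test_lhs_ge:
  "ennreal ((1 + a) powr (- p) * (m powr (a * p) / (a * p))) \<le> hardy_lhs p l (hardy_test a p m)"
proof -
  have "ennreal ((1 + a) powr (- p) * (m powr (a * p) / (a * p)))
      = (\<integral>\<^sup>+x\<in>{0<..<m}. ennreal ((1 + a) powr (- p) * x powr (a * p - 1)) \<partial>lborel)"
    using nn_integral_powr_Ioo[of "a * p - 1" m "(1 + a) powr (- p)"] ap m by simp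
  also have "\<dots> = (\<integral>\<^sup>+x\<in>{0<..<m}. epow (ennreal (1 / x)
      * (\<integral>\<^sup>+y\<in>{0<..<x}. ennreal (hardy_test a p m y) \<partial>lborel)) p * ennreal (1 / x) \<partial>lborel)"
    by (intro set_nn_integral_cong) (simp_all add: hardy_test_lhs_integrand_small)
  also have "\<dots> \<le> hardy_lhs p l (hardy_test a p m)"
    unfolding hardy_lhs_def by (intro nn_set_integral_set_mono Ioo_subset_Iset_of_le ml)
  finally show ?thesis .
qed

lemma hardy_test_rhs_le:
  "hardy_rhs p l (hardy_test a p m) \<le> ennreal (m powr (a * p) / (a * p) + (if p < 0 then - (m powr p) / p else 0))"
proof -
  define b where "b = (\<lambda>x. if x < m then x powr (a * p - 1) else if p < 0 then x powr (p - 1) else 0)"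
  have [measurable]: "b \<in> borel_measurable borel"
    unfolding b_def by measurable
  have pointwise: "epow (ennreal (hardy_test a p m x)) p * ennreal (wt l x / x) \<le> ennreal (b x)"
    if "x \<in> Iset l" for x
  proof -
    have x: "0 < x" "0 \<le> wt l x" "wt l x \<le> 1" using that by (auto simp: Iset_def wt_nonneg wt_le_one)
    have "u * (wt l x / x) \<le> u * (1 / x)" if "0 \<le> u" for u
      using x that by (intro mult_left_mono divide_right_mono) auto
    then show ?thesis
      using x ap hardy_test_epow_small[of x]
      by (auto simp: b_def hardy_test_def epow_ennreal epow_def powr_diff ennreal_leI
          simp flip: ennreal_mult')
  qed
  have "hardy_rhs p l (hardy_test a p m) \<le> (\<integral>\<^sup>+x\<in>{0<..<m} \<union> {m..}. ennreal (b x) \<partial>lborel)"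
    unfolding hardy_rhs_def using pointwise m
    by (intro nn_integral_mono) (auto simp: Iset_def split: split_indicator)
  also have "\<dots> = (\<integral>\<^sup>+x\<in>{0<..<m}. ennreal (b x) \<partial>lborel) + (\<integral>\<^sup>+x\<in>{m..}. ennreal (b x) \<partial>lborel)"
    by (rule nn_integral_disjoint_pair) auto
  also have "(\<integral>\<^sup>+x\<in>{0<..<m}. ennreal (b x) \<partial>lborel) = ennreal (m powr (a * p) / (a * p))"
  proof -
    have "(\<integral>\<^sup>+x\<in>{0<..<m}. ennreal (b x) \<partial>lborel) = (\<integral>\<^sup>+x\<in>{0<..<m}. ennreal (1 * x powr (a * p - 1)) \<partial>lborel)"
      by (intro set_nn_integral_cong) (auto simp: b_def)
    with ap m nn_integral_powr_Ioo[of "a * p - 1" m 1] show ?thesis by simp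
  qed
  also have "(\<integral>\<^sup>+x\<in>{m..}. ennreal (b x) \<partial>lborel) = ennreal (if p < 0 then - (m powr p) / p else 0)"
  proof (cases "p < 0")
    case True
    then have "(\<integral>\<^sup>+x\<in>{m..}. ennreal (b x) \<partial>lborel) = (\<integral>\<^sup>+x\<in>{m..}. ennreal (1 * x powr (p - 1)) \<partial>lborel)"
      by (intro set_nn_integral_cong) (auto simp: b_def)
    with True m nn_integral_powr_Ici[of "p - 1" m 1] show ?thesis by simp
  next
    case False
    then have "(\<integral>\<^sup>+x\<in>{m..}. ennreal (b x) \<partial>lborel) = (\<integral>\<^sup>+x\<in>{m..}. 0 \<partial>lborel)"
      by (intro set_nn_integral_cong) (auto simp: b_def)
    with False show ?thesis by simp
  qed
  finally show ?thesis
    using ap m by (simp add: divide_nonneg_neg flip: ennreal_plus)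
qed

lemma hardy_test_rhs_ge:
  "ennreal (m powr (a * p) / (a * p) - m powr (a * p) / (a * p + 1)) \<le> hardy_rhs p l (hardy_test a p m)"
proof -
  define f where "f x = x powr (a * p - 1) - (1 / m) * x powr (a * p)" for x
  have f: "0 \<le> f x" "ennreal (f x) \<le> epow (ennreal (hardy_test a p m x)) p * ennreal (wt l x / x)"
    if "0 < x" "x < m" for x
  proof -
    have f_eq: "f x = x powr (a * p) * ((1 - x / m) / x)"
      using that m by (simp add: f_def powr_diff field_simps)
    then show "0 \<le> f x" using that by simp
    have "1 - x / m \<le> wt l x" using wt_ge_linear[OF m ml] that by simp
    then have "f x \<le> x powr (a * p) * (wt l x / x)"
      unfolding f_eq using that by (intro mult_left_mono divide_right_mono) auto
    then show "ennreal (f x) \<le> epow (ennreal (hardy_test a p m x)) p * ennreal (wt l x / x)"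
      using that by (simp add: hardy_test_epow_small ennreal_leI flip: ennreal_mult')
  qed
  have "ennreal (m powr (a * p) / (a * p)) = (\<integral>\<^sup>+x\<in>{0<..<m}. ennreal (1 * x powr (a * p - 1)) \<partial>lborel)"
    using nn_integral_powr_Ioo[of "a * p - 1" m 1] ap m by simp
  also have "\<dots> = (\<integral>\<^sup>+x\<in>{0<..<m}. ennreal (f x) + ennreal (1 / m * x powr (a * p)) \<partial>lborel)"
    using f(1) by (intro set_nn_integral_cong) (auto simp: f_def simp flip: ennreal_plus)
  also have "\<dots> = (\<integral>\<^sup>+x\<in>{0<..<m}. ennreal (f x) \<partial>lborel) + ennreal (m powr (a * p) / (a * p + 1))"
    using ap m nn_integral_powr_Ioo[of "a * p" m "1 / m"]
    by (simp add: nn_set_integral_add f_def powr_add)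
  finally have "(\<integral>\<^sup>+x\<in>{0<..<m}. ennreal (f x) \<partial>lborel)
      = ennreal (m powr (a * p) / (a * p)) - ennreal (m powr (a * p) / (a * p + 1))"
    by (simp add: ennreal_add_diff_cancel_right)
  then have "ennreal (m powr (a * p) / (a * p) - m powr (a * p) / (a * p + 1))
      = (\<integral>\<^sup>+x\<in>{0<..<m}. ennreal (f x) \<partial>lborel)"
    using ap m by (simp add: ennreal_minus)
  also have "\<dots> \<le> (\<integral>\<^sup>+x\<in>{0<..<m}. epow (ennreal (hardy_test a p m x)) p * ennreal (wt l x / x) \<partial>lborel)"
    using f(2) by (intro nn_integral_mono) (auto split: split_indicator)
  also have "\<dots> \<le> hardy_rhs p l (hardy_test a p m)"
    unfolding hardy_rhs_def by (intro nn_set_integral_set_mono Ioo_subset_Iset_of_le ml)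
  finally show ?thesis .
qed

lemma hardy_test_rhs_pos_finite:
  "0 < hardy_rhs p l (hardy_test a p m)" "hardy_rhs p l (hardy_test a p m) < \<infinity>"
proof -
  have "m powr (a * p) / (a * p + 1) < m powr (a * p) / (a * p)"
    using ap m by (intro divide_strict_left_mono) auto
  then show "0 < hardy_rhs p l (hardy_test a p m)"
    by (intro less_le_trans[OF _ hardy_test_rhs_ge]) simp
  show "hardy_rhs p l (hardy_test a p m) < \<infinity>"
    by (rule le_less_trans[OF hardy_test_rhs_le]) simp
qed

lemma hardy_test_lhs_le:
  assumes p: "0 < p"
  shows "hardy_lhs p l (hardy_test a p m) \<le> ennreal ((1 + a) powr (- p) * (m powr (a * p) / (a * p) + m powr (a * p) / p))"
proof -
  define M where "M = (m powr (a + 1) / (a + 1)) powr p"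
  have M: "M * (- (m powr (- p - 1 + 1)) / (- p - 1 + 1)) = (1 + a) powr (- p) * m powr (a * p) / p"
    using a m p by (simp add: M_def powr_divide powr_powr powr_minus_divide field_simps flip: powr_add)
  define b where "b x = (if x < m then (1 + a) powr (- p) * x powr (a * p - 1) else M * x powr (- p - 1))" for x
  have pointwise: "epow (ennreal (1 / x) * (\<integral>\<^sup>+y\<in>{0<..<x}. ennreal (hardy_test a p m y) \<partial>lborel)) p
      * ennreal (1 / x) = ennreal (b x)" if "0 < x" for x
    using hardy_test_lhs_integrand[of a p m x] hardy_test_lhs_integrand_small[of x] a p m that
    by (auto simp: b_def M_def min_def)
  have "hardy_lhs p l (hardy_test a p m) \<le> (\<integral>\<^sup>+x\<in>{0<..<m} \<union> {m..}. ennreal (b x) \<partial>lborel)"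
    unfolding hardy_lhs_def using pointwise m
    by (intro nn_integral_mono) (auto simp: Iset_def split: split_indicator)
  also have "\<dots> = (\<integral>\<^sup>+x\<in>{0<..<m}. ennreal ((1 + a) powr (- p) * x powr (a * p - 1)) \<partial>lborel)
      + (\<integral>\<^sup>+x\<in>{m..}. ennreal (M * x powr (- p - 1)) \<partial>lborel)"
    by (subst nn_integral_disjoint_pair) (auto simp: b_def intro!: arg_cong2[where f = "(+)"] set_nn_integral_cong)
  also have "\<dots> = ennreal ((1 + a) powr (- p) * (m powr (a * p) / (a * p) + m powr (a * p) / p))"
    using ap m p M by (simp add: nn_integral_powr_Ioo nn_integral_powr_Ici M_def distrib_left
        flip: ennreal_plus)
  finally show ?thesis .
qed

end

lemma at_right_0_obtain:
  fixes d :: real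
  assumes "\<forall>\<^sub>F t in at_right 0. P t" "0 < d"
  obtains t where "0 < t" "t < d" "P t"
proof -
  have "\<forall>\<^sub>F t in at_right 0. 0 < t \<and> t < d \<and> P t"
    using assms(1) eventually_at_right_less[of 0] order_tendstoD(2)[OF tendsto_ident_at assms(2)]
    by eventually_elim auto
  with that show ?thesis
    using eventually_happens[of _ "at_right (0::real)"] by auto
qed

lemma ennreal_mult_less_of_bounds:
  assumes "X \<le> ennreal u" "ennreal v \<le> Y" "C * u < v" "0 \<le> u" "0 < v"
  shows "ennreal C * X < Y"
proof -
  have "ennreal C * X \<le> ennreal C * ennreal u"
    using assms(1) by (rule mult_left_mono) simp
  also have "\<dots> = ennreal (C * u)"
    using assms(4) by (simp add: ennreal_mult'')
  also have "\<dots> < ennreal v"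
    using assms(3,5) by (intro ennreal_lessI)
  finally show ?thesis using assms(2) by simp
qed

lemma less_ennreal_mult_of_bounds:
  assumes "X \<le> ennreal u" "ennreal v \<le> Y" "u < C * v" "0 \<le> u" "0 \<le> v"
  shows "X < ennreal C * Y"
proof -
  have "X < ennreal (C * v)"
    using assms(3,4) by (intro le_less_trans[OF assms(1)] ennreal_lessI) auto
  also have "\<dots> = ennreal C * ennreal v"
    using assms(5) by (simp add: ennreal_mult'')
  also have "\<dots> \<le> ennreal C * Y"
    using assms(2) by (rule mult_left_mono) simp
  finally show ?thesis .
qed

lemma hardy_lhs_le_rhs_sharp:
  assumes l: "0 < l" and p: "p < 0 \<or> 1 \<le> p" and C: "C < 1"
  shows "\<exists>g. hardy_adm p l g \<and> 0 < hardy_rhs p l g \<and> hardy_rhs p l g < \<infinity>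
           \<and> \<not> hardy_lhs p l g \<le> ennreal C * hardy_rhs p l g"
proof -
  obtain m where m: "0 < m" "ereal m \<le> l"
    using ereal_dense2[OF l] by (auto simp: less_imp_le)
  define E where "E = (if p < 0 then - (m powr p) / p else 0)"
  have "0 \<le> E" using p by (auto simp: E_def divide_nonneg_neg)
  have "((\<lambda>t. (1 + t / p) powr (- p) * m powr t - C * (m powr t + t * E)) \<longlongrightarrow> 1 - C) (at_right 0)"
    using p m by (auto intro!: tendsto_eq_intros)
  then have "\<forall>\<^sub>F t in at_right 0. 0 < (1 + t / p) powr (- p) * m powr t - C * (m powr t + t * E)"
    using C by (intro order_tendstoD(1)) auto
  then obtain t where t: "0 < t" "t < \<bar>p\<bar>"
    and key: "C * (m powr t + t * E) < (1 + t / p) powr (- p) * m powr t"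
    using p by (elim at_right_0_obtain) auto
  define a where "a = t / p"
  have ap: "a * p = t" "-1 < a"
    using p t by (auto simp: a_def field_simps abs_if split: if_splits)
  let ?g = "hardy_test a p m"
  have lhs: "ennreal ((1 + a) powr (- p) * (m powr t / t)) \<le> hardy_lhs p l ?g"
    using hardy_test_lhs_ge[of a p m l] ap t m by simp
  have rhs: "hardy_rhs p l ?g \<le> ennreal (m powr t / t + E)"
    using hardy_test_rhs_le[of a p m l] ap t m by (simp add: E_def)
  have "C * (m powr t / t + E) < (1 + a) powr (- p) * (m powr t / t)"
  proof -
    have "C * (m powr t / t + E) = C * (m powr t + t * E) / t"
      using t by (simp add: field_simps)
    also have "\<dots> < (1 + t / p) powr (- p) * m powr t / t"
      using key t by (intro divide_strict_right_mono) auto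
    finally show ?thesis by (simp add: a_def)
  qed
  then have "ennreal C * hardy_rhs p l ?g < hardy_lhs p l ?g"
    using \<open>0 \<le> E\<close> ap t m by (intro ennreal_mult_less_of_bounds[OF rhs lhs]) auto
  with hardy_test_rhs_pos_finite[of a p m l] ap t m show ?thesis
    by (intro exI[of _ ?g]) (simp add: hardy_adm_hardy_test not_le)
qed

lemma hardy_rhs_le_lhs_sharp:
  assumes l: "0 < l" and p: "0 < p" and C: "1 < C"
  shows "\<exists>g. hardy_adm p l g \<and> 0 < hardy_rhs p l g \<and> hardy_rhs p l g < \<infinity>
           \<and> \<not> ennreal C * hardy_rhs p l g \<le> hardy_lhs p l g"
proof -
  obtain m where m: "0 < m" "ereal m \<le> l"
    using ereal_dense2[OF l] by (auto simp: less_imp_le)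
  have "((\<lambda>t. C * (m powr t - t * m powr t / (t + 1))
      - (1 + t / p) powr (- p) * (m powr t + t * m powr t / p)) \<longlongrightarrow> C - 1) (at_right 0)"
    using p m by (auto intro!: tendsto_eq_intros)
  then have "\<forall>\<^sub>F t in at_right 0. 0 < C * (m powr t - t * m powr t / (t + 1))
      - (1 + t / p) powr (- p) * (m powr t + t * m powr t / p)"
    using C by (intro order_tendstoD(1)) auto
  then obtain t where t: "0 < t"
    and key: "(1 + t / p) powr (- p) * (m powr t + t * m powr t / p) < C * (m powr t - t * m powr t / (t + 1))"
    by (elim at_right_0_obtain[where d = 1]) auto
  define a where "a = t / p"
  have "a * p = t" "0 < a"
    using p t by (auto simp: a_def)
  then have ap: "a * p = t" "-1 < a" by auto
  let ?g = "hardy_test a p m"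
  define R where "R = m powr t / t - m powr t / (t + 1)"
  have "m powr t / (t + 1) < m powr t / t"
    using t m by (intro divide_strict_left_mono) auto
  then have R: "0 < R" by (simp add: R_def)
  have lhs: "hardy_lhs p l ?g \<le> ennreal ((1 + a) powr (- p) * (m powr t / t + m powr t / p))"
    using hardy_test_lhs_le[of a p m l] ap t m p by simp
  have rhs: "ennreal R \<le> hardy_rhs p l ?g"
    using hardy_test_rhs_ge[of a p m l] ap t m by (simp add: R_def)
  have "(1 + a) powr (- p) * (m powr t / t + m powr t / p) < C * R"
  proof -
    have "(1 + a) powr (- p) * (m powr t / t + m powr t / p)
        = (1 + t / p) powr (- p) * (m powr t + t * m powr t / p) / t"
      using t by (simp add: a_def field_simps)
    also have "\<dots> < C * (m powr t - t * m powr t / (t + 1)) / t"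
      using key t by (intro divide_strict_right_mono) auto
    also have "\<dots> = C * R"
      using t by (simp add: R_def field_simps)
    finally show ?thesis .
  qed
  then have "hardy_lhs p l ?g < ennreal C * hardy_rhs p l ?g"
    using ap t m p R by (intro less_ennreal_mult_of_bounds[OF lhs rhs]) auto
  with hardy_test_rhs_pos_finite[of a p m l] ap t m show ?thesis
    by (intro exI[of _ ?g]) (simp add: hardy_adm_hardy_test not_le)
qed

theorem theorem2p2:
  fixes l :: ereal and p :: real
  assumes "0 < l"
  shows "((p < 0 \<or> 1 \<le> p) \<longrightarrow>
           (\<forall>g. hardy_adm p l g \<longrightarrow> hardy_lhs p l g \<le> hardy_rhs p l g)) \<and>
      ((0 < p \<and> p \<le> 1) \<longrightarrow>
           (\<forall>g. hardy_adm p l g \<longrightarrow> hardy_rhs p l g \<le> hardy_lhs p l g)) \<and>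
      ((p < 0 \<or> 1 \<le> p) \<longrightarrow>
           (\<forall>C::real. C < 1 \<longrightarrow> (\<exists>g. hardy_adm p l g \<and> 0 < hardy_rhs p l g
              \<and> hardy_rhs p l g < \<infinity> \<and> \<not> hardy_lhs p l g \<le> ennreal C * hardy_rhs p l g))) \<and>
      ((0 < p \<and> p \<le> 1) \<longrightarrow>
           (\<forall>C::real. 1 < C \<longrightarrow> (\<exists>g. hardy_adm p l g \<and> 0 < hardy_rhs p l g
              \<and> hardy_rhs p l g < \<infinity> \<and> \<not> ennreal C * hardy_rhs p l g \<le> hardy_lhs p l g)))"
proof (intro conjI impI allI)
  fix g assume "p < 0 \<or> 1 \<le> p" "hardy_adm p l g"
  then show "hardy_lhs p l g \<le> hardy_rhs p l g"
    by (intro hardy_lhs_le_rhs)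
next
  fix g assume "0 < p \<and> p \<le> 1" "hardy_adm p l g"
  then show "hardy_rhs p l g \<le> hardy_lhs p l g"
    by (intro hardy_rhs_le_lhs) simp_all
next
  fix C :: real assume "p < 0 \<or> 1 \<le> p" "C < 1"
  then show "\<exists>g. hardy_adm p l g \<and> 0 < hardy_rhs p l g \<and> hardy_rhs p l g < \<infinity>
      \<and> \<not> hardy_lhs p l g \<le> ennreal C * hardy_rhs p l g"
    by (intro hardy_lhs_le_rhs_sharp[OF assms])
next
  fix C :: real assume "0 < p \<and> p \<le> 1" "1 < C"
  then show "\<exists>g. hardy_adm p l g \<and> 0 < hardy_rhs p l g \<and> hardy_rhs p l g < \<infinity>
      \<and> \<not> ennreal C * hardy_rhs p l g \<le> hardy_lhs p l g"
    by (intro hardy_rhs_le_lhs_sharp[OF assms]) simp_all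
qed

end
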